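(* Let \[ r_2 = \frac{1}{4} \left(1 + \sqrt{33} - \sqrt{2 \left(9 + \sqrt{33} \right)} \right). \] Then \[ \operatorname{Li}_{2}(r_2^6) - 3 \operatorname{Li}_{2}(r_2^4) - 8 \operatorname{Li}_{2}(r_2^3) + 21 \operatorname{Li}_{2}(r_2^2) + 24 \operatorname{Li}_{2}(r_2) - 11 \zeta(2) = -6 \log^{2}(r_2). \]
   Context: $\operatorname{Li}_2(x)=\sum_{n\ge1}x^n/n^2$ is the dilogarithm and $\zeta(2)=\pi^2/6$. *)

theory Defs
  imports "HOL-Analysis.Analysis"
begin

definition Li2 :: "real \<Rightarrow> real" where
  "Li2 x = (\<Sum>n. x ^ Suc n / (real (Suc n))^2)"

definition zeta2 :: real where
  "zeta2 = pi^2 / 6"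

end

theory Submission
  imports Defs "HOL-Real_Asymp.Real_Asymp"
begin

text \<open>
  Rogers' dilogarithm L(x) = Li2(x) + ln x ln(1 - x) / 2 satisfies on (0, 1) the reflection
  relation L(x) + L(1 - x) = L(1) = pi^2 / 6 and Abel's five-term relation. Both follow by
  differentiation: (L o u)' = (ln u (ln (1 - u))' - ln (1 - u) (ln u)') / 2, the logarithms of all
  arguments are integer combinations of a few basic logarithms, and the resulting antisymmetric
  bilinear expressions cancel; the constants come from the limit at 0.

  r2 is a root of x^4 - x^3 - 6 x^2 - x + 1. In Z[r2] many pairs x, 1 - x are both products of
  integer powers of the six positive numbers r2, r2^3 + 3 r2^2 + 2 r2 - 1, -3 r2^3 + 2 r2^2 + 2 r2,
  1 + r2, 2 and 1 + 2 r2. An integer combination of sixty reflection and five-term relations at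
  such arguments, checked by evaluation in Z[r2], gives
  L(r2^6) - 3 L(r2^4) - 8 L(r2^3) + 21 L(r2^2) + 24 L(r2) = 11 L(1).
  Passing from L to Li2 leaves the terms k ln r2 ln (1 - r2^k) / 2, which add up to 6 (ln r2)^2
  because (1 - r2^6)^6 (1 - r2^2)^42 (1 - r2)^24 = r2^12 (1 - r2^4)^12 (1 - r2^3)^24.
\<close>

section \<open>The dilogarithm on [-1, 1]\<close>

lemma Li2_series_term_bound:
  assumes "\<bar>x\<bar> \<le> 1"
  shows "norm (x ^ Suc n / (real (Suc n))^2) \<le> 1 / (real (Suc n))^2"
proof -
  have "\<bar>x\<bar> ^ Suc n \<le> 1"
    using assms by (intro power_le_one) auto
  then show ?thesis
    by (simp add: abs_mult power_abs divide_right_mono)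
qed

lemma summable_inverse_squares: "summable (\<lambda>n. 1 / (real (Suc n))^2)"
  using inverse_squares_sums by (simp add: sums_iff)

lemma summable_Li2_series:
  assumes "\<bar>x\<bar> \<le> 1"
  shows "summable (\<lambda>n. x ^ Suc n / (real (Suc n))^2)"
  using summable_comparison_test'[OF summable_inverse_squares Li2_series_term_bound[OF assms]] .

lemma Li2_0: "Li2 0 = 0"
  unfolding Li2_def by simp

lemma Li2_1: "Li2 1 = pi^2 / 6"
  using inverse_squares_sums unfolding Li2_def by (simp add: sums_iff)

(* The term n = 0 vanishes because 1 / 0 = 0. *)
lemma Li2_power_series:
  assumes "\<bar>x\<bar> \<le> 1"
  shows "(\<lambda>n. 1 / (real n)^2 * x ^ n) sums Li2 x"
proof -
  have "(\<lambda>n. 1 / (real (Suc n))^2 * x ^ Suc n) sums Li2 x"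
    using summable_sums[OF summable_Li2_series[OF assms]] by (simp add: Li2_def)
  then show ?thesis
    using sums_Suc_iff[of "\<lambda>n. 1 / (real n)^2 * x ^ n"] by simp
qed

lemma continuous_on_Li2: "continuous_on {-1..1} Li2"
proof -
  have "uniform_limit {-1..1} (\<lambda>n x. \<Sum>i<n. x ^ Suc i / (real (Suc i))^2) Li2 sequentially"
    unfolding Li2_def
    by (rule Weierstrass_m_test[OF Li2_series_term_bound summable_inverse_squares]) auto
  moreover have "\<forall>\<^sub>F n in sequentially.
      continuous_on {-1..1} (\<lambda>x. \<Sum>i<n. x ^ Suc i / (real (Suc i))^2)"
    by (intro always_eventually allI continuous_intros) auto
  ultimately show ?thesis
    using uniform_limit_theorem by fastforce
qed

lemma sums_ln_1_minus_div:
  assumes "\<bar>x\<bar> < 1" "x \<noteq> 0"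
  shows "(\<lambda>n. x ^ n / real (Suc n)) sums (- ln (1 - x) / x)"
proof -
  have "(\<lambda>n. - ((- (- x)) ^ n) / real n) sums ln (1 + - x)"
    by (rule ln_series') (use assms in simp)
  then have "(\<lambda>n. x ^ n / real n) sums (- ln (1 - x))"
    using sums_minus by fastforce
  then have "(\<lambda>n. x ^ Suc n / real (Suc n)) sums (- ln (1 - x))"
    by (subst sums_Suc_iff) simp
  then have "(\<lambda>n. x ^ Suc n / real (Suc n) / x) sums (- ln (1 - x) / x)"
    by (rule sums_divide)
  then show ?thesis
    using assms by simp
qed

lemma has_real_derivative_Li2:
  assumes "\<bar>x\<bar> < 1" "x \<noteq> 0"
  shows "(Li2 has_real_derivative - ln (1 - x) / x) (at x)"
proof -
  define c :: "nat \<Rightarrow> real" where "c n = 1 / (real n)^2" for n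
  have series: "(\<lambda>n. c n * z ^ n) sums Li2 z" if "\<bar>z\<bar> \<le> 1" for z
    unfolding c_def using that by (rule Li2_power_series)
  have "summable (\<lambda>n. c n * z ^ n)" if "norm z < 1" for z
    using that by (intro sums_summable[OF series]) simp
  moreover have "norm x < 1"
    using assms by simp
  ultimately have deriv:
      "((\<lambda>z. \<Sum>n. c n * z ^ n) has_real_derivative (\<Sum>n. diffs c n * x ^ n)) (at x)"
    by (rule termdiffs_strong')
  have "(\<lambda>n. diffs c n * x ^ n) = (\<lambda>n. x ^ n / real (Suc n))"
    by (simp add: diffs_def c_def power2_eq_square)
  then have sum_diffs: "(\<Sum>n. diffs c n * x ^ n) = - ln (1 - x) / x"
    using sums_ln_1_minus_div[OF assms] sums_unique by metis
  have "\<forall>\<^sub>F z in nhds x. z \<in> ball 0 1"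
    using assms by (intro eventually_nhds_in_open) auto
  then have near: "\<forall>\<^sub>F z in nhds x. (\<Sum>n. c n * z ^ n) = Li2 z"
  proof eventually_elim
    case (elim z)
    then have "\<bar>z\<bar> \<le> 1"
      by simp
    then show ?case
      using series sums_unique by metis
  qed
  show ?thesis
    using DERIV_cong_ev[OF refl near sum_diffs] deriv by simp
qed

section \<open>Rogers' dilogarithm and its functional equations\<close>

definition rogers_L :: "real \<Rightarrow> real" where
  "rogers_L x = Li2 x + ln x * ln (1 - x) / 2"

lemma rogers_L_1: "rogers_L 1 = pi^2 / 6"
  by (simp add: rogers_L_def Li2_1)

lemma has_real_derivative_rogers_L:
  assumes "0 < x" "x < 1"
  shows "(rogers_L has_real_derivative - ln (1 - x) / (2 * x) - ln x / (2 * (1 - x))) (at x)"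
proof -
  have "(Li2 has_real_derivative - ln (1 - x) / x) (at x)"
    using assms by (intro has_real_derivative_Li2) auto
  then show ?thesis
    unfolding rogers_L_def[abs_def] using assms
    by (auto intro!: derivative_eq_intros simp: field_simps)
qed

lemma has_real_derivative_rogers_L_comp:
  assumes "(u has_real_derivative u') (at z)" "0 < u z" "u z < 1"
    and "u' = P * u z" "u' = - Q * (1 - u z)"
  shows "((\<lambda>z. rogers_L (u z)) has_real_derivative (ln (u z) * Q - ln (1 - u z) * P) / 2) (at z)"
proof -
  have P: "P = u' / u z"
    using assms(2,4) by simp
  have Q: "Q = - u' / (1 - u z)"
    using assms(3,5) by simp
  have "(- ln (1 - u z) / (2 * u z) - ln (u z) / (2 * (1 - u z))) * u'
      = (ln (u z) * Q - ln (1 - u z) * P) / 2"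
    unfolding P Q using assms(2,3) by (simp add: field_simps)
  then show ?thesis
    using DERIV_cong[OF DERIV_chain2[OF has_real_derivative_rogers_L[OF assms(2,3)] assms(1)]]
    by blast
qed

lemma continuous_at_rogers_L: "0 < x \<Longrightarrow> x < 1 \<Longrightarrow> isCont rogers_L x"
  using has_real_derivative_rogers_L DERIV_isCont by blast

lemma Li2_tendsto_at_right_0: "(Li2 \<longlongrightarrow> 0) (at_right 0)"
proof -
  have "(Li2 \<longlongrightarrow> Li2 0) (at 0 within {0..1})"
    using continuous_on_subset[OF continuous_on_Li2, of "{0..1}"] by (auto simp: continuous_on_def)
  then show ?thesis
    by (simp add: at_within_Icc_at_right Li2_0)
qed

lemma Li2_1_minus_tendsto_at_right_0: "((\<lambda>x. Li2 (1 - x)) \<longlongrightarrow> pi^2 / 6) (at_right 0)"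
proof -
  have "continuous_on {0..1} (\<lambda>x. Li2 (1 - x))"
    by (rule continuous_on_compose2[OF continuous_on_Li2]) (auto intro!: continuous_intros)
  then have "((\<lambda>x. Li2 (1 - x)) \<longlongrightarrow> Li2 (1 - 0)) (at 0 within {0..1})"
    unfolding continuous_on_def by (rule bspec) simp
  then show ?thesis
    by (simp add: at_within_Icc_at_right Li2_1)
qed

lemma ln_mult_ln_1_minus_tendsto_at_right_0: "((\<lambda>x::real. ln x * ln (1 - x)) \<longlongrightarrow> 0) (at_right 0)"
  by real_asymp

lemma rogers_L_tendsto_at_right_0: "(rogers_L \<longlongrightarrow> 0) (at_right 0)"
proof -
  have "((\<lambda>x. Li2 x + ln x * ln (1 - x) / 2) \<longlongrightarrow> 0 + 0 / 2) (at_right 0)"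
    by (intro tendsto_intros Li2_tendsto_at_right_0 ln_mult_ln_1_minus_tendsto_at_right_0) simp
  then show ?thesis
    unfolding rogers_L_def[abs_def] by simp
qed

lemma rogers_L_comp_tendsto_at_right_0:
  assumes "(f \<longlongrightarrow> 0) (at_right 0)" "\<forall>\<^sub>F y in at_right 0. 0 < f y"
  shows "((\<lambda>y. rogers_L (f y)) \<longlongrightarrow> 0) (at_right (0::real))"
  using filterlim_compose[OF rogers_L_tendsto_at_right_0 tendsto_imp_filterlim_at_right[OF assms]] .

lemma deriv_zero_imp_eq_limit_at_right:
  fixes h :: "real \<Rightarrow> real"
  assumes deriv: "\<And>y. a < y \<Longrightarrow> y < b \<Longrightarrow> (h has_real_derivative 0) (at y)"
    and lim: "(h \<longlongrightarrow> c) (at_right a)" and x: "a < x" "x < b"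
  shows "h x = c"
proof -
  obtain k where k: "\<And>y. y \<in> {a<..<b} \<Longrightarrow> h y = k"
    using has_field_derivative_zero_constant[of "{a<..<b}" h] deriv
    by (auto simp: has_field_derivative_at_within)
  have "a < b"
    using x by simp
  have "\<forall>\<^sub>F y in at_right a. h y = k"
    using eventually_at_right_real[OF \<open>a < b\<close>] by eventually_elim (rule k)
  then have "(h \<longlongrightarrow> k) (at_right a)"
    by (rule tendsto_eventually)
  then have "k = c"
    using lim by (rule tendsto_unique[rotated]) simp
  then show ?thesis
    using k x by auto
qed

lemma rogers_L_reflection:
  assumes "0 < x" "x < 1"
  shows "rogers_L x + rogers_L (1 - x) = pi^2 / 6"
proof (rule deriv_zero_imp_eq_limit_at_right[where h = "\<lambda>y. rogers_L y + rogers_L (1 - y)"])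
  fix y :: real
  assume y: "0 < y" "y < 1"
  have "((\<lambda>y. rogers_L y + rogers_L (1 - y)) has_real_derivative
      (ln y * (- 1 / (1 - y)) - ln (1 - y) * (1 / y)) / 2
      + (ln (1 - y) * (1 / y) - ln (1 - (1 - y)) * (- 1 / (1 - y))) / 2) (at y)"
    using y by (intro DERIV_add has_real_derivative_rogers_L_comp) (auto intro!: derivative_eq_intros)
  moreover have "(ln y * (- 1 / (1 - y)) - ln (1 - y) * (1 / y)) / 2
      + (ln (1 - y) * (1 / y) - ln (1 - (1 - y)) * (- 1 / (1 - y))) / 2 = 0"
    by (simp add: add_divide_distrib[symmetric])
  ultimately show "((\<lambda>y. rogers_L y + rogers_L (1 - y)) has_real_derivative 0) (at y)"
    by simp
next
  have "((\<lambda>y. Li2 y + Li2 (1 - y) + ln y * ln (1 - y)) \<longlongrightarrow> 0 + pi^2 / 6 + 0) (at_right 0)"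
    by (intro tendsto_intros Li2_tendsto_at_right_0 Li2_1_minus_tendsto_at_right_0
        ln_mult_ln_1_minus_tendsto_at_right_0)
  moreover have "(\<lambda>y. Li2 y + Li2 (1 - y) + ln y * ln (1 - y)) = (\<lambda>y. rogers_L y + rogers_L (1 - y))"
    by (simp add: rogers_L_def fun_eq_iff algebra_simps)
  ultimately show "((\<lambda>y. rogers_L y + rogers_L (1 - y)) \<longlongrightarrow> pi^2 / 6) (at_right 0)"
    by simp
qed (use assms in auto)

lemma five_term_arguments_bounds:
  fixes x y :: real
  assumes "0 < x" "x < 1" "0 < y" "y < 1"
  shows "0 < x * y" "x * y < 1"
    and "0 < x * (1 - y) / (1 - x * y)" "x * (1 - y) / (1 - x * y) < 1"
    and "0 < y * (1 - x) / (1 - x * y)" "y * (1 - x) / (1 - x * y) < 1"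
proof -
  show "0 < x * y"
    using assms by simp
  show xy: "x * y < 1"
    using assms mult_strict_mono[of x 1 y 1] by simp
  show "0 < x * (1 - y) / (1 - x * y)" "0 < y * (1 - x) / (1 - x * y)"
    using assms xy by simp_all
  have "x * (1 - y) < 1 - x * y" "y * (1 - x) < 1 - x * y"
    using assms by (simp_all add: algebra_simps)
  then show "x * (1 - y) / (1 - x * y) < 1" "y * (1 - x) / (1 - x * y) < 1"
    using xy by simp_all
qed

lemma ln_five_term_arguments:
  fixes x y :: real
  assumes "0 < x" "x < 1" "0 < y" "y < 1"
  shows "ln (x * (1 - y) / (1 - x * y)) = ln x + ln (1 - y) - ln (1 - x * y)"
    and "ln (1 - x * (1 - y) / (1 - x * y)) = ln (1 - x) - ln (1 - x * y)"
    and "ln (y * (1 - x) / (1 - x * y)) = ln y + ln (1 - x) - ln (1 - x * y)"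
    and "ln (1 - y * (1 - x) / (1 - x * y)) = ln (1 - y) - ln (1 - x * y)"
proof -
  have "0 < 1 - x * y"
    using five_term_arguments_bounds[OF assms] by simp
  moreover have "1 - x * (1 - y) / (1 - x * y) = (1 - x) / (1 - x * y)"
    "1 - y * (1 - x) / (1 - x * y) = (1 - y) / (1 - x * y)"
    using calculation by (simp_all add: field_simps)
  ultimately show "ln (x * (1 - y) / (1 - x * y)) = ln x + ln (1 - y) - ln (1 - x * y)"
    and "ln (1 - x * (1 - y) / (1 - x * y)) = ln (1 - x) - ln (1 - x * y)"
    and "ln (y * (1 - x) / (1 - x * y)) = ln y + ln (1 - x) - ln (1 - x * y)"
    and "ln (1 - y * (1 - x) / (1 - x * y)) = ln (1 - y) - ln (1 - x * y)"
    using assms by (simp_all add: ln_mult ln_div)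
qed

lemma has_real_derivative_five_term_arguments:
  fixes x z :: real
  assumes "x * z \<noteq> 1"
  shows "((\<lambda>z. x * (1 - z) / (1 - x * z)) has_real_derivative - x * (1 - x) / (1 - x * z)^2) (at z)"
    and "((\<lambda>z. z * (1 - x) / (1 - x * z)) has_real_derivative (1 - x) / (1 - x * z)^2) (at z)"
  using assms by (auto intro!: derivative_eq_intros simp: field_simps power2_eq_square)

lemma has_real_derivative_rogers_L_five_term:
  assumes x: "0 < x" "x < 1" and z: "0 < z" "z < 1"
  shows "((\<lambda>z. rogers_L z - rogers_L (x * z) - rogers_L (x * (1 - z) / (1 - x * z))
      - rogers_L (z * (1 - x) / (1 - x * z))) has_real_derivative 0) (at z)"
proof -
  note args = five_term_arguments_bounds[OF x z]
  have nz: "z \<noteq> 0" "1 - z \<noteq> 0" "1 - x * z \<noteq> 0"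
    using z args by simp_all
  define a b c d e where "a = ln x" and "b = ln z" and "c = ln (1 - x)" and "d = ln (1 - z)"
    and "e = ln (1 - x * z)"
  define b' d' e' where "b' = 1 / z" and "d' = - 1 / (1 - z)" and "e' = - x / (1 - x * z)"
  have logs: "ln (x * z) = a + b" "ln (x * (1 - z) / (1 - x * z)) = a + d - e"
    "ln (1 - x * (1 - z) / (1 - x * z)) = c - e" "ln (z * (1 - x) / (1 - x * z)) = b + c - e"
    "ln (1 - z * (1 - x) / (1 - x * z)) = d - e"
    using x z ln_five_term_arguments[OF x z] by (simp_all add: a_def b_def c_def d_def e_def ln_mult)
  have L1: "(rogers_L has_real_derivative (b * d' - d * b') / 2) (at z)"
    unfolding b_def d_def
    by (rule has_real_derivative_rogers_L_comp[OF DERIV_ident]) (use z in \<open>simp_all add: b'_def d'_def\<close>)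
  have L2: "((\<lambda>z. rogers_L (x * z)) has_real_derivative ((a + b) * e' - e * b') / 2) (at z)"
    unfolding logs(1)[symmetric] e_def
    by (rule has_real_derivative_rogers_L_comp)
      (use args nz in \<open>auto intro!: derivative_eq_intros simp: b'_def e'_def\<close>)
  have L3: "((\<lambda>z. rogers_L (x * (1 - z) / (1 - x * z))) has_real_derivative
      ((a + d - e) * (- e') - (c - e) * (d' - e')) / 2) (at z)"
    unfolding logs(2,3)[symmetric]
    by (rule has_real_derivative_rogers_L_comp[OF has_real_derivative_five_term_arguments(1)])
      (use args nz in \<open>simp_all add: d'_def e'_def divide_simps\<close>,
        simp_all add: algebra_simps power2_eq_square)
  have L4: "((\<lambda>z. rogers_L (z * (1 - x) / (1 - x * z))) has_real_derivative
      ((b + c - e) * (d' - e') - (d - e) * (b' - e')) / 2) (at z)"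
    unfolding logs(4,5)[symmetric]
    by (rule has_real_derivative_rogers_L_comp[OF has_real_derivative_five_term_arguments(2)])
      (use args nz in \<open>simp_all add: b'_def d'_def e'_def divide_simps\<close>,
        simp_all add: algebra_simps power2_eq_square)
  have "(b * d' - d * b') - ((a + b) * e' - e * b') - ((a + d - e) * (- e') - (c - e) * (d' - e'))
      - ((b + c - e) * (d' - e') - (d - e) * (b' - e')) = 0"
    by (simp add: algebra_simps)
  then show ?thesis
    using DERIV_diff[OF DERIV_diff[OF DERIV_diff[OF L1 L2] L3] L4]
    by (simp add: diff_divide_distrib[symmetric])
qed

lemma rogers_L_five_term:
  assumes x: "0 < x" "x < 1" and y: "0 < y" "y < 1"
  shows "rogers_L x + rogers_L y
    = rogers_L (x * y) + rogers_L (x * (1 - y) / (1 - x * y)) + rogers_L (y * (1 - x) / (1 - x * y))"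
proof -
  let ?g = "\<lambda>z. rogers_L z - rogers_L (x * z) - rogers_L (x * (1 - z) / (1 - x * z))
    - rogers_L (z * (1 - x) / (1 - x * z))"
  have near_0: "\<forall>\<^sub>F z in at_right 0. z \<in> {0<..<1::real}"
    by (rule eventually_at_right_real) simp
  have "?g y = 0 - 0 - rogers_L x - 0"
  proof (rule deriv_zero_imp_eq_limit_at_right[where h = ?g])
    show "(?g has_real_derivative 0) (at z)" if "0 < z" "z < 1" for z
      using has_real_derivative_rogers_L_five_term[OF x that] .
    show "(?g \<longlongrightarrow> 0 - 0 - rogers_L x - 0) (at_right 0)"
    proof (intro tendsto_diff rogers_L_tendsto_at_right_0 rogers_L_comp_tendsto_at_right_0)
      show "((\<lambda>z. x * z) \<longlongrightarrow> 0) (at_right 0)" "((\<lambda>z. z * (1 - x) / (1 - x * z)) \<longlongrightarrow> 0) (at_right 0)"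
        by (auto intro!: tendsto_eq_intros)
      show "\<forall>\<^sub>F z in at_right 0. 0 < x * z" "\<forall>\<^sub>F z in at_right 0. 0 < z * (1 - x) / (1 - x * z)"
        using near_0 by (eventually_elim, use five_term_arguments_bounds[OF x] in simp)+
      have "((\<lambda>z. x * (1 - z) / (1 - x * z)) \<longlongrightarrow> x) (at_right 0)"
        by (auto intro!: tendsto_eq_intros)
      then show "((\<lambda>z. rogers_L (x * (1 - z) / (1 - x * z))) \<longlongrightarrow> rogers_L x) (at_right 0)"
        by (rule isCont_tendsto_compose[OF continuous_at_rogers_L[OF x]])
    qed
  qed (use y in auto)
  then show ?thesis
    by simp
qed

section \<open>Exact arithmetic in Z[r] and products of powers\<close>

type_synonym zr = "int \<times> int \<times> int \<times> int"

fun zr_val :: "real \<Rightarrow> zr \<Rightarrow> real" where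
  "zr_val r (a, b, c, d) = of_int a + of_int b * r + of_int c * r^2 + of_int d * r^3"

fun zr_add :: "zr \<Rightarrow> zr \<Rightarrow> zr" where
  "zr_add (a0, a1, a2, a3) (b0, b1, b2, b3) = (a0 + b0, a1 + b1, a2 + b2, a3 + b3)"

(* Multiplication modulo r^4 = r^3 + 6 r^2 + r - 1, which gives r^5 = 7 r^3 + 7 r^2 - 1
   and r^6 = 14 r^3 + 42 r^2 + 6 r - 7. *)
fun zr_mult :: "zr \<Rightarrow> zr \<Rightarrow> zr" where
  "zr_mult (a0, a1, a2, a3) (b0, b1, b2, b3) =
    (let c4 = a1 * b3 + a2 * b2 + a3 * b1; c5 = a2 * b3 + a3 * b2; c6 = a3 * b3
     in (a0 * b0 - c4 - c5 - 7 * c6,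
         a0 * b1 + a1 * b0 + c4 + 6 * c6,
         a0 * b2 + a1 * b1 + a2 * b0 + 6 * c4 + 7 * c5 + 42 * c6,
         a0 * b3 + a1 * b2 + a2 * b1 + a3 * b0 + c4 + 7 * c5 + 14 * c6))"

fun zr_pow :: "zr \<Rightarrow> nat \<Rightarrow> zr" where
  "zr_pow p n = (if n = 0 then (1, 0, 0, 0) else zr_mult p (zr_pow p (n - 1)))"

declare zr_pow.simps [simp del]

lemma zr_val_add: "zr_val r (zr_add p q) = zr_val r p + zr_val r q"
  by (cases p; cases q) (simp add: algebra_simps)

lemma zr_val_mult:
  assumes "r^4 = r^3 + 6 * r^2 + r - 1"
  shows "zr_val r (zr_mult p q) = zr_val r p * zr_val r q"
proof -
  obtain a0 a1 a2 a3 b0 b1 b2 b3 where pq: "p = (a0, a1, a2, a3)" "q = (b0, b1, b2, b3)"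
    by (cases p; cases q) auto
  have "zr_val r p * zr_val r q = zr_val r (zr_mult p q)
      + (r^4 - (r^3 + 6 * r^2 + r - 1)) * (of_int (a1 * b3 + a2 * b2 + a3 * b1)
        + of_int (a2 * b3 + a3 * b2) * (r + 1) + of_int (a3 * b3) * (r^2 + r + 7))"
    unfolding pq by (simp add: Let_def algebra_simps power2_eq_square power3_eq_cube power4_eq_xxxx)
  then show ?thesis
    using assms by simp
qed

lemma zr_val_pow:
  assumes "r^4 = r^3 + 6 * r^2 + r - 1"
  shows "zr_val r (zr_pow p n) = zr_val r p ^ n"
proof (induction n)
  case 0
  then show ?case
    by (simp add: zr_pow.simps)
next
  case (Suc n)
  then show ?case
    by (simp add: zr_pow.simps zr_val_mult[OF assms])
qed

fun power_prod :: "real \<Rightarrow> zr list \<Rightarrow> int list \<Rightarrow> real" where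
  "power_prod r (g # gs) (k # ks) = zr_val r g powi k * power_prod r gs ks"
| "power_prod r _ _ = 1"

fun power_prod_num :: "zr list \<Rightarrow> int list \<Rightarrow> zr" where
  "power_prod_num (g # gs) (k # ks) = zr_mult (zr_pow g (nat k)) (power_prod_num gs ks)"
| "power_prod_num _ _ = (1, 0, 0, 0)"

fun power_prod_den :: "zr list \<Rightarrow> int list \<Rightarrow> zr" where
  "power_prod_den (g # gs) (k # ks) = zr_mult (zr_pow g (nat (- k))) (power_prod_den gs ks)"
| "power_prod_den _ _ = (1, 0, 0, 0)"

lemma power_prod_eq_num_div_den:
  assumes "r^4 = r^3 + 6 * r^2 + r - 1" and "\<forall>g \<in> set gs. 0 < zr_val r g"
  shows "power_prod r gs ks = zr_val r (power_prod_num gs ks) / zr_val r (power_prod_den gs ks)"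
    and "0 < zr_val r (power_prod_num gs ks)" and "0 < zr_val r (power_prod_den gs ks)"
proof -
  have "power_prod r gs ks = zr_val r (power_prod_num gs ks) / zr_val r (power_prod_den gs ks)
    \<and> 0 < zr_val r (power_prod_num gs ks) \<and> 0 < zr_val r (power_prod_den gs ks)"
    using assms(2)
  proof (induction gs ks rule: power_prod_num.induct)
    case (1 g gs k ks)
    then have "0 < zr_val r g"
      by simp
    then have "zr_val r g powi k = zr_val r g ^ nat k / zr_val r g ^ nat (- k)"
      by (simp add: power_int_def field_simps)
    with 1 show ?case
      by (simp add: zr_val_mult[OF assms(1)] zr_val_pow[OF assms(1)])
  qed simp_all
  then show "power_prod r gs ks = zr_val r (power_prod_num gs ks) / zr_val r (power_prod_den gs ks)"
    and "0 < zr_val r (power_prod_num gs ks)" and "0 < zr_val r (power_prod_den gs ks)"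
    by auto
qed

lemma power_prod_map2_add:
  assumes "\<forall>g \<in> set gs. zr_val r g \<noteq> 0" "length a = length b"
  shows "power_prod r gs (map2 (+) a b) = power_prod r gs a * power_prod r gs b"
  using assms
proof (induction gs arbitrary: a b)
  case (Cons g gs)
  then show ?case
    by (cases a; cases b) (simp_all add: power_int_add)
qed simp

lemma power_prod_map2_diff:
  assumes "\<forall>g \<in> set gs. zr_val r g \<noteq> 0" "length a = length b"
  shows "power_prod r gs (map2 (-) a b) = power_prod r gs a / power_prod r gs b"
  using assms
proof (induction gs arbitrary: a b)
  case (Cons g gs)
  then show ?case
    by (cases a; cases b) (simp_all add: power_int_diff)
qed simp

lemma power_prod_pos:
  assumes "\<forall>g \<in> set gs. 0 < zr_val r g"
  shows "0 < power_prod r gs ks"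
  using assms by (induction r gs ks rule: power_prod.induct) simp_all

lemma ln_power_prod:
  assumes "\<forall>g \<in> set gs. 0 < zr_val r g"
  shows "ln (power_prod r gs ks) = (\<Sum>(g, k) \<leftarrow> zip gs ks. of_int k * ln (zr_val r g))"
  using assms
proof (induction r gs ks rule: power_prod.induct)
  case (1 r g gs k ks)
  then have "0 < zr_val r g" "0 < power_prod r gs ks"
    using power_prod_pos by auto
  with 1 show ?case
    by (simp add: ln_mult power_int_def ln_realpow ln_inverse)
qed simp_all

definition gens :: "zr list" where
  "gens = [(0, 1, 0, 0), (-1, 2, 3, 1), (0, 2, 2, -3), (1, 1, 0, 0), (2, 0, 0, 0), (1, 2, 0, 0)]"

definition complementary :: "int list \<Rightarrow> int list \<Rightarrow> bool" where
  "complementary e e' \<longleftrightarrow> length e = length gens \<and> length e' = length gens \<and>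
    zr_mult (power_prod_den gens e) (power_prod_den gens e')
      = zr_add (zr_mult (power_prod_num gens e) (power_prod_den gens e'))
          (zr_mult (power_prod_num gens e') (power_prod_den gens e))"

section \<open>Certified integer combinations of dilogarithm relations\<close>

definition formal_eval :: "(int list \<Rightarrow> real) \<Rightarrow> (int list \<times> int) list \<Rightarrow> real" where
  "formal_eval F xs = (\<Sum>(e, c) \<leftarrow> xs. of_int c * F e)"

fun add_term :: "int list \<Rightarrow> int \<Rightarrow> (int list \<times> int) list \<Rightarrow> (int list \<times> int) list" where
  "add_term e c [] = (if c = 0 then [] else [(e, c)])"
| "add_term e c ((f, d) # xs) =
    (if e = f then (if c + d = 0 then xs else (f, c + d) # xs) else (f, d) # add_term e c xs)"

definition collect_terms :: "(int list \<times> int) list \<Rightarrow> (int list \<times> int) list" where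
  "collect_terms xs = foldr (\<lambda>(e, c). add_term e c) xs []"

lemma formal_eval_Nil: "formal_eval F [] = 0"
  by (simp add: formal_eval_def)

lemma formal_eval_Cons: "formal_eval F ((e, c) # xs) = of_int c * F e + formal_eval F xs"
  by (simp add: formal_eval_def)

lemma formal_eval_append: "formal_eval F (xs @ ys) = formal_eval F xs + formal_eval F ys"
  by (simp add: formal_eval_def)

lemma formal_eval_negate: "formal_eval F (map (\<lambda>(e, c). (e, - c)) xs) = - formal_eval F xs"
  by (induction xs) (auto simp: formal_eval_def)

lemma formal_eval_add_term: "formal_eval F (add_term e c xs) = of_int c * F e + formal_eval F xs"
proof (induction e c xs rule: add_term.induct)
  case (2 e c f d xs)
  show ?case
  proof (cases "e = f \<and> c + d = 0")
    case True
    then have "of_int c * F f + of_int d * F f = 0"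
      by (metis distrib_right mult_zero_left of_int_0 of_int_add)
    with True show ?thesis
      by (simp add: formal_eval_Cons)
  next
    case False
    with 2 show ?thesis
      by (auto simp: formal_eval_Cons algebra_simps)
  qed
qed (simp add: formal_eval_def)

lemma formal_eval_collect_terms: "formal_eval F (collect_terms xs) = formal_eval F xs"
proof (induction xs)
  case (Cons x xs)
  then show ?case
    by (cases x) (simp add: collect_terms_def formal_eval_add_term formal_eval_Cons)
qed (simp add: collect_terms_def)

(* Writing x_e for the product of the powers of gens with exponent vector e,
   Five_Term c a a' b b' p stands for c times the five-term relation at x = x_a, y = x_b,
   where x_a' = 1 - x, x_b' = 1 - y and x_p = 1 - x y; Reflection c u u' stands for
   c (L(x_u) + L(x_u') - L(1)), where x_u' = 1 - x_u. *)
datatype dilog_relation =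
  Five_Term int "int list" "int list" "int list" "int list" "int list"
| Reflection int "int list" "int list"

fun valid_relation :: "dilog_relation \<Rightarrow> bool" where
  "valid_relation (Five_Term c a a' b b' p) \<longleftrightarrow>
    complementary a a' \<and> complementary b b' \<and> complementary (map2 (+) a b) p"
| "valid_relation (Reflection c u u') \<longleftrightarrow> complementary u u'"

fun relation_terms :: "dilog_relation \<Rightarrow> (int list \<times> int) list" where
  "relation_terms (Five_Term c a a' b b' p) =
    [(a, c), (b, c), (map2 (+) a b, - c),
     (map2 (-) (map2 (+) a b') p, - c), (map2 (-) (map2 (+) b a') p, - c)]"
| "relation_terms (Reflection c u u') = [(u, c), (u', c), (replicate (length gens) 0, - c)]"

locale quartic_root =
  fixes r :: real
  assumes quartic: "r^4 = r^3 + 6 * r^2 + r - 1"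
    and gens_pos: "\<forall>g \<in> set gens. 0 < zr_val r g"
begin

abbreviation gval :: "int list \<Rightarrow> real" where
  "gval \<equiv> power_prod r gens"

lemma gval_pos: "0 < gval e"
  using power_prod_pos[OF gens_pos] .

lemma gens_nonzero: "\<forall>g \<in> set gens. zr_val r g \<noteq> 0"
  using gens_pos by auto

lemma gval_add: "length a = length b \<Longrightarrow> gval (map2 (+) a b) = gval a * gval b"
  by (rule power_prod_map2_add[OF gens_nonzero])

lemma gval_diff: "length a = length b \<Longrightarrow> gval (map2 (-) a b) = gval a / gval b"
  by (rule power_prod_map2_diff[OF gens_nonzero])

lemma complementary_sum_1:
  assumes "complementary e e'"
  shows "gval e + gval e' = 1"
proof -
  let ?N = "zr_val r (power_prod_num gens e)" and ?D = "zr_val r (power_prod_den gens e)"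
  let ?N' = "zr_val r (power_prod_num gens e')" and ?D' = "zr_val r (power_prod_den gens e')"
  have eq: "?D * ?D' = ?N * ?D' + ?N' * ?D"
    using assms unfolding complementary_def
    by (metis zr_val_add zr_val_mult[OF quartic])
  have "0 < ?D" "0 < ?D'"
    using power_prod_eq_num_div_den[OF quartic gens_pos] by auto
  then have "gval e + gval e' = (?N * ?D' + ?N' * ?D) / (?D * ?D')"
    by (simp add: power_prod_eq_num_div_den(1)[OF quartic gens_pos] add_frac_eq)
  also have "\<dots> = 1"
    unfolding eq[symmetric] using \<open>0 < ?D\<close> \<open>0 < ?D'\<close> by simp
  finally show ?thesis .
qed

lemma formal_eval_relation_terms:
  assumes "valid_relation rel"
  shows "formal_eval (\<lambda>e. rogers_L (gval e)) (relation_terms rel) = 0"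
proof (cases rel)
  case (Reflection c u u')
  then have "gval u + gval u' = 1"
    using assms complementary_sum_1 by simp
  then have "gval u' = 1 - gval u"
    by simp
  then have "rogers_L (gval u) + rogers_L (gval u') = rogers_L 1"
    using rogers_L_reflection[of "gval u"] gval_pos[of u] gval_pos[of u'] by (simp add: rogers_L_1)
  moreover have "gval (replicate (length gens) 0) = 1"
    by (simp add: gens_def)
  then have "formal_eval (\<lambda>e. rogers_L (gval e)) (relation_terms rel)
      = of_int c * (rogers_L (gval u) + rogers_L (gval u') - rogers_L 1)"
    unfolding Reflection by (simp add: formal_eval_def algebra_simps)
  ultimately show ?thesis
    by simp
next
  case (Five_Term c a a' b b' p)
  define x y where "x = gval a" and "y = gval b"
  have valid: "complementary a a'" "complementary b b'" "complementary (map2 (+) a b) p"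
    using assms Five_Term by simp_all
  then have lengths: "length a = length gens" "length a' = length gens" "length b = length gens"
    "length b' = length gens" "length p = length gens"
    by (simp_all add: complementary_def)
  have sums: "x + gval a' = 1" "y + gval b' = 1" "x * y + gval p = 1"
    using valid lengths by (simp_all add: x_def y_def complementary_sum_1 flip: gval_add)
  have x: "0 < x" "x < 1" and y: "0 < y" "y < 1"
    using sums gval_pos unfolding x_def y_def by (smt (verit))+
  have "gval a' = 1 - x" "gval b' = 1 - y" "gval p = 1 - x * y"
    using sums by simp_all
  then have "gval (map2 (+) a b) = x * y"
    "gval (map2 (-) (map2 (+) a b') p) = x * (1 - y) / (1 - x * y)"
    "gval (map2 (-) (map2 (+) b a') p) = y * (1 - x) / (1 - x * y)"
    using lengths by (simp_all add: gval_add gval_diff x_def y_def)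
  then have "formal_eval (\<lambda>e. rogers_L (gval e)) (relation_terms rel) = of_int c *
      (rogers_L x + rogers_L y - rogers_L (x * y) - rogers_L (x * (1 - y) / (1 - x * y))
        - rogers_L (y * (1 - x) / (1 - x * y)))"
    unfolding Five_Term by (simp add: formal_eval_def x_def[symmetric] y_def[symmetric] algebra_simps)
  with rogers_L_five_term[OF x y] show ?thesis
    by simp
qed

lemma certificate_sound:
  assumes "list_all valid_relation rels"
    and "collect_terms (concat (map relation_terms rels) @ map (\<lambda>(e, c). (e, - c)) target) = []"
  shows "formal_eval (\<lambda>e. rogers_L (gval e)) target = 0"
proof -
  let ?F = "\<lambda>e. rogers_L (gval e)"
  have "formal_eval ?F (concat (map relation_terms rels)) = 0"
    using assms(1) formal_eval_relation_terms
    by (induction rels) (simp_all add: formal_eval_def)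
  moreover have "formal_eval ?F (concat (map relation_terms rels) @ map (\<lambda>(e, c). (e, - c)) target) = 0"
    by (metis assms(2) formal_eval_collect_terms formal_eval_Nil)
  ultimately show ?thesis
    by (simp add: formal_eval_append formal_eval_negate)
qed

end

section \<open>The certificate for r2\<close>

definition cert_relations :: "dilog_relation list" where
  "cert_relations = [
    Five_Term (-2) [5, -1, -1, 0, 0, 1] [1, 0, 0, -1, 1, 0]
      [5, -1, -1, 0, 0, 1] [1, 0, 0, -1, 1, 0] [1, 0, 0, -2, 2, 0],
    Reflection 7 [-11, 3, 2, -6, 0, 0] [-13, 3, 2, -6, 0, 0],
    Five_Term (-7) [5, -1, -1, 2, 0, 1] [2, 0, 0, 0, 0, 0]
      [-13, 3, 2, -6, 0, 0] [-11, 3, 2, -6, 0, 0] [-11, 3, 2, -6, 1, 0],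
    Five_Term 1 [0, 0, 0, 0, -1, 0] [0, 0, 0, 0, -1, 0]
      [5, -1, -1, 2, 0, 1] [2, 0, 0, 0, 0, 0] [13, -3, -2, 6, -1, 0],
    Reflection 2 [12, -3, -2, 6, -3, 0] [21, -5, -4, 8, -3, 2],
    Reflection 2 [1, 0, 0, -2, 1, 0] [13, -3, -2, 4, 0, 0],
    Reflection (-2) [10, -2, -2, 0, 0, 2] [1, 0, 0, -2, 2, 0],
    Five_Term 2 [1, 0, 0, -2, 2, 0] [10, -2, -2, 0, 0, 2]
      [12, -3, -2, 6, -2, 0] [13, -3, -2, 4, -2, 0] [1, 0, 0, -2, 1, 0],
    Five_Term (-2) [1, 0, 0, 0, 0, 0] [5, -1, -1, 1, 0, 1]
      [12, -3, -2, 6, -3, 0] [21, -5, -4, 8, -3, 2] [16, -4, -3, 7, -3, 1],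
    Reflection (-4) [1, 0, 0, -1, 0, 0] [0, 0, 0, -1, 0, 0],
    Five_Term 2 [0, 0, 0, -1, 0, 0] [1, 0, 0, -1, 0, 0]
      [-8, 2, 1, -4, 0, 1] [-11, 3, 2, -6, 1, 0] [-12, 3, 2, -5, 0, 0],
    Five_Term 8 [-8, 2, 1, -2, 0, 0] [-2, 1, 0, -2, 0, 1]
      [0, 0, 0, -2, 0, 1] [2, 0, 0, -2, 0, 0] [-11, 3, 2, -6, 1, 0],
    Reflection (-4) [-12, 3, 2, -5, 0, 0] [-8, 2, 1, -5, 0, 1],
    Reflection (-4) [2, 0, 0, 0, 0, -1] [8, -2, -1, 3, 0, -1],
    Five_Term 4 [-12, 3, 2, -5, 0, 0] [-8, 2, 1, -5, 0, 1]
      [8, -2, -1, 3, 0, -1] [2, 0, 0, 0, 0, -1] [-12, 3, 2, -4, 1, -1],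
    Reflection (-2) [5, -1, -1, 1, -1, 1] [0, 0, 0, 1, -1, 0],
    Reflection (-4) [2, 0, 0, -2, 0, 0] [0, 0, 0, -2, 0, 1],
    Five_Term (-2) [-12, 3, 2, -5, 1, 0] [-7, 2, 1, -3, 0, 0]
      [12, -3, -2, 6, -2, 0] [13, -3, -2, 4, -2, 0] [5, -1, -1, 1, -1, 1],
    Reflection (-6) [-7, 2, 1, -3, 0, 0] [-12, 3, 2, -5, 1, 0],
    Five_Term 1 [1, 0, 0, 0, 0, 0] [5, -1, -1, 1, 0, 1]
      [1, 0, 0, 0, 0, 0] [5, -1, -1, 1, 0, 1] [5, -1, -1, 2, 0, 1],
    Reflection (-4) [2, 0, 0, -2, 1, 0] [8, -2, -1, 1, 0, 0],
    Five_Term (-4) [0, 0, 0, 2, -1, -1] [8, -2, -1, 3, -1, -1]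
      [0, 0, 0, -2, 0, 1] [2, 0, 0, -2, 0, 0] [0, 0, 0, 0, -1, 0],
    Reflection 16 [2, 0, 0, 0, 0, 0] [5, -1, -1, 2, 0, 1],
    Reflection 4 [2, 0, 0, -1, 0, 0] [-4, 1, 1, -3, 1, 0],
    Five_Term 4 [5, -1, -1, 2, -1, 0] [9, -2, -2, 4, -1, 1]
      [-4, 1, 1, -3, 1, 0] [2, 0, 0, -1, 0, 0] [0, 0, 0, -1, 0, 0],
    Reflection 2 [4, -1, 0, 0, 0, -1] [4, -1, 0, 1, 0, -1],
    Five_Term (-8) [-8, 2, 1, -2, 0, 0] [-2, 1, 0, -2, 0, 1]
      [-4, 1, 1, -3, 1, 0] [2, 0, 0, -1, 0, 0] [-7, 2, 1, -3, 0, 0],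
    Reflection (-2) [1, 0, 0, 2, -1, -1] [8, -2, -1, 5, -1, -1],
    Five_Term (-2) [1, 0, 0, -2, 1, 1] [9, -2, -1, 2, 0, 0]
      [3, -1, 0, 3, -1, -2] [5, -1, 0, 2, -1, -2] [4, -1, 0, 0, 0, -1],
    Reflection 2 [1, 0, 0, 2, 0, -1] [-4, 1, 1, 0, 0, -1],
    Five_Term (-2) [0, 0, 0, -2, 0, 0] [-3, 1, 0, -2, 0, 1]
      [-4, 1, 1, 0, 0, -1] [1, 0, 0, 2, 0, -1] [-12, 3, 2, -4, 1, -1],
    Five_Term 2 [4, -1, 0, 1, 0, -1] [4, -1, 0, 0, 0, -1]
      [0, 0, 0, -1, 0, 0] [1, 0, 0, -1, 0, 0] [4, -1, 0, 1, 0, -1],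
    Five_Term (-2) [1, 0, 0, 2, 0, -1] [-4, 1, 1, 0, 0, -1]
      [-8, 2, 1, -5, 0, 1] [-12, 3, 2, -5, 0, 0] [-12, 3, 2, -5, 1, 0],
    Reflection 14 [1, 0, 0, 0, 0, 0] [5, -1, -1, 1, 0, 1],
    Five_Term (-10) [0, 0, 0, 0, -1, 0] [0, 0, 0, 0, -1, 0]
      [5, -1, -1, 1, 0, 1] [1, 0, 0, 0, 0, 0] [0, 0, 0, 1, -1, 0],
    Five_Term 2 [13, -3, -2, 6, -3, 0] [16, -4, -3, 7, -3, 1]
      [1, 0, 0, -1, 0, 0] [0, 0, 0, -1, 0, 0] [11, -3, -2, 5, -3, 0],
    Reflection (-4) [-7, 2, 1, -3, 1, 0] [-3, 1, 0, -1, 0, 1],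
    Reflection 4 [2, 0, 0, -1, -1, 0] [4, -1, -1, -1, -1, 2],
    Reflection 4 [7, -1, -1, 2, -1, 0] [9, -2, -2, 5, -1, 1],
    Five_Term (-4) [4, -1, -1, -1, -1, 2] [2, 0, 0, -1, -1, 0]
      [9, -2, -2, 5, -1, 1] [7, -1, -1, 2, -1, 0] [14, -3, -2, 5, -2, 0],
    Five_Term (-4) [-7, 2, 1, -3, 1, 0] [-3, 1, 0, -1, 0, 1]
      [0, 0, 0, 0, -1, 0] [0, 0, 0, 0, -1, 0] [-12, 3, 2, -5, 1, 0],
    Five_Term 8 [-8, 2, 1, -5, 0, 1] [-12, 3, 2, -5, 0, 0]
      [5, -1, -1, 1, 0, 1] [1, 0, 0, 0, 0, 0] [-12, 3, 2, -6, 1, 0],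
    Five_Term 4 [2, 0, 0, -2, 1, 0] [8, -2, -1, 1, 0, 0]
      [9, -2, -2, 4, -2, 1] [12, -3, -2, 5, -2, 0] [12, -3, -2, 4, -1, 0],
    Reflection (-4) [4, -1, 0, 2, 0, -2] [-8, 2, 2, -4, 2, -2],
    Reflection 8 [1, 0, 0, 1, 0, -1] [-4, 1, 1, -2, 1, -1],
    Five_Term (-4) [-4, 1, 1, -2, 1, -1] [1, 0, 0, 1, 0, -1]
      [-4, 1, 1, -2, 1, -1] [1, 0, 0, 1, 0, -1] [4, -1, 0, 2, 0, -2],
    Reflection (-4) [13, -3, -2, 6, -3, 0] [16, -4, -3, 7, -3, 1],
    Five_Term (-4) [3, -1, 0, 3, -1, -2] [5, -1, 0, 2, -1, -2]
      [13, -3, -3, 4, -2, 3] [14, -3, -2, 5, -2, 0] [13, -3, -2, 6, -3, 0],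
    Five_Term 8 [0, 0, 0, 2, -1, -1] [8, -2, -1, 3, -1, -1]
      [9, -2, -2, 2, -1, 2] [13, -3, -2, 4, -1, 0] [12, -3, -2, 5, -2, 0],
    Reflection 4 [-3, 1, 0, -4, 0, 2] [-12, 3, 2, -6, 1, 0],
    Reflection 4 [11, -2, -2, 2, -1, 1] [12, -3, -2, 4, -1, 0],
    Five_Term (-4) [-12, 3, 2, -6, 1, 0] [-3, 1, 0, -4, 0, 2]
      [12, -3, -2, 4, -1, 0] [11, -2, -2, 2, -1, 1] [-3, 1, 0, -2, 0, 1],
    Reflection (-6) [8, -2, -1, 3, -1, -1] [0, 0, 0, 2, -1, -1],
    Five_Term (-6) [4, -1, 0, 1, 0, -1] [4, -1, 0, 0, 0, -1]
      [5, -1, -1, 1, 0, 1] [1, 0, 0, 0, 0, 0] [1, 0, 0, -2, 1, 1],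
    Reflection (-6) [9, -2, -1, 2, 0, 0] [1, 0, 0, -2, 1, 1],
    Reflection 1 [14, -3, -2, 5, -3, 0] [11, -3, -2, 5, -3, 0],
    Five_Term (-1) [3, 0, 0, 0, 0, 0] [2, 0, -1, -1, 1, 3]
      [11, -3, -2, 5, -3, 0] [14, -3, -2, 5, -3, 0] [11, -3, -2, 5, -3, 0],
    Five_Term 6 [3, -1, 0, 3, -1, -2] [5, -1, 0, 2, -1, -2]
      [2, 0, -1, -1, 1, 3] [3, 0, 0, 0, 0, 0] [2, 0, 0, 0, 0, 0],
    Five_Term 3 [2, 0, 0, 0, 0, 0] [5, -1, -1, 2, 0, 1]
      [2, 0, 0, 0, 0, 0] [5, -1, -1, 2, 0, 1] [18, -4, -3, 8, 0, 1],
    Reflection (-7) [3, 0, 0, 0, 0, 0] [2, 0, -1, -1, 1, 3]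
  ]"

lemma cert_relations_valid: "list_all valid_relation cert_relations"
  by code_simp

definition cert_target :: "(int list \<times> int) list" where
  "cert_target = [([6, 0, 0, 0, 0, 0], 1), ([4, 0, 0, 0, 0, 0], -3), ([3, 0, 0, 0, 0, 0], -8),
    ([2, 0, 0, 0, 0, 0], 21), ([1, 0, 0, 0, 0, 0], 24), ([0, 0, 0, 0, 0, 0], -11)]"

lemma cert_relations_sum_to_target:
  "collect_terms (concat (map relation_terms cert_relations) @ map (\<lambda>(e, c). (e, - c)) cert_target) = []"
  by code_simp

lemma complementary_one_minus_powers:
  "complementary [6, 0, 0, 0, 0, 0] [-9, 3, 1, -6, 4, 3]"
  "complementary [4, 0, 0, 0, 0, 0] [18, -4, -3, 8, 0, 1]"
  "complementary [3, 0, 0, 0, 0, 0] [2, 0, -1, -1, 1, 3]"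
  "complementary [2, 0, 0, 0, 0, 0] [5, -1, -1, 2, 0, 1]"
  "complementary [1, 0, 0, 0, 0, 0] [5, -1, -1, 1, 0, 1]"
  by code_simp+

context quartic_root
begin

lemma r_pos: "0 < r"
  using gens_pos by (simp add: gens_def)

lemma rogers_L_combination:
  "rogers_L (r^6) - 3 * rogers_L (r^4) - 8 * rogers_L (r^3) + 21 * rogers_L (r^2)
    + 24 * rogers_L r - 11 * rogers_L 1 = 0"
  using certificate_sound[OF cert_relations_valid cert_relations_sum_to_target]
  by (simp add: formal_eval_def cert_target_def gens_def)

lemma ln_one_minus_powers:
  "6 * ln (1 - r^6) - 12 * ln (1 - r^4) - 24 * ln (1 - r^3) + 42 * ln (1 - r^2) + 24 * ln (1 - r)
    = 12 * ln r"
proof -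
  have "gval [k, 0, 0, 0, 0, 0] = r powi k" for k
    by (simp add: gens_def)
  then have gvals: "1 - r^6 = gval [-9, 3, 1, -6, 4, 3]" "1 - r^4 = gval [18, -4, -3, 8, 0, 1]"
    "1 - r^3 = gval [2, 0, -1, -1, 1, 3]" "1 - r^2 = gval [5, -1, -1, 2, 0, 1]"
    "1 - r = gval [5, -1, -1, 1, 0, 1]"
    using complementary_one_minus_powers[THEN complementary_sum_1] by (simp_all add: eq_diff_eq')
  show ?thesis
    unfolding gvals ln_power_prod[OF gens_pos] by (simp add: gens_def algebra_simps)
qed

end

lemma r2_bounds:
  assumes "r = (1 + sqrt 33 - sqrt (2 * (9 + sqrt 33))) / 4"
  shows "0.3285 < r" "r < 0.3286"
proof -
  have s: "5.744562 < sqrt 33" "sqrt 33 < 5.744563"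
    by (rule real_less_rsqrt real_less_lsqrt; simp add: power2_eq_square)+
  have "5.430388 < sqrt (2 * (9 + sqrt 33))" "sqrt (2 * (9 + sqrt 33)) < 5.430391"
    by (rule real_less_rsqrt real_less_lsqrt; use s in \<open>simp add: power2_eq_square\<close>)+
  with s assms show "0.3285 < r" "r < 0.3286"
    by simp_all
qed

lemma r2_quartic:
  assumes "r = (1 + sqrt 33 - sqrt (2 * (9 + sqrt 33))) / 4"
  shows "r^4 = r^3 + 6 * r^2 + r - 1"
proof -
  define s where "s = sqrt 33"
  have s2: "s^2 = 33"
    by (simp add: s_def)
  have "1 + s - 4 * r = sqrt (2 * (9 + s))"
    using assms by (simp add: s_def)
  then have "(1 + s - 4 * r)^2 = 2 * (9 + s)"
    by (simp add: s_def)
  moreover have "(1 + s - 4 * r)^2 = 1 + s^2 + 16 * r^2 + 2 * s - 8 * r - 8 * (r * s)"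
    by (simp add: power2_eq_square algebra_simps)
  ultimately have "r * s = 2 * r^2 - r + 2"
    using s2 by simp
  then have "(2 * r^2 - r + 2)^2 = 33 * r^2"
    using s2 by (metis power_mult_distrib mult.commute)
  moreover have "(2 * r^2 - r + 2)^2 = 4 * r^4 - 4 * r^3 + 9 * r^2 - 4 * r + 4"
    by (simp add: power2_eq_square power3_eq_cube power4_eq_xxxx algebra_simps)
  ultimately show ?thesis
    by simp
qed

lemma r2_quartic_root:
  assumes "r = (1 + sqrt 33 - sqrt (2 * (9 + sqrt 33))) / 4"
  shows "quartic_root r"
proof
  show "r^4 = r^3 + 6 * r^2 + r - 1"
    using assms by (rule r2_quartic)
  have r: "0.3285 < r" "r < 0.3286"
    using assms by (rule r2_bounds)+
  \<comment> \<open>The second generator is only about 0.016 at r2, hence the four-digit bounds.\<close>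
  have "0.3285 * 0.3285 < r * r" "0.3285 * (0.3285 * 0.3285) < r * (r * r)"
    "r * (r * r) < 0.3286 * (0.3286 * 0.3286)"
    using r by (intro mult_strict_mono; simp)+
  with r show "\<forall>g \<in> set gens. 0 < zr_val r g"
    by (auto simp: gens_def power2_eq_square power3_eq_cube)
qed

theorem mainTheorem4:
  fixes r2 :: real
  assumes "r2 = (1 + sqrt 33 - sqrt (2 * (9 + sqrt 33))) / 4"
  shows "Li2 (r2^6) - 3 * Li2 (r2^4) - 8 * Li2 (r2^3) + 21 * Li2 (r2^2)
           + 24 * Li2 r2 - 11 * zeta2 = - 6 * (ln r2)^2"
proof -
  interpret quartic_root r2
    using assms by (rule r2_quartic_root)
  have "ln r2 * (6 * ln (1 - r2^6) - 12 * ln (1 - r2^4) - 24 * ln (1 - r2^3) + 42 * ln (1 - r2^2)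
      + 24 * ln (1 - r2)) = 12 * (ln r2)^2"
    unfolding ln_one_minus_powers by (simp add: power2_eq_square)
  with rogers_L_combination r_pos show ?thesis
    unfolding rogers_L_def zeta2_def by (simp add: ln_realpow Li2_1 algebra_simps)
qed

end
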